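(* Let $r,m\ge1$, let $\xi$ be an $F^r$-stable irreducible character of $G^{F^{rm}}$ and $\tilde\xi$ any extension of $\xi$ to $G^{F^{rm}}\langle\sigma^r\rangle$. Let $R^{(m)}_{\tilde\xi}=Sh_{F^{rm}/F^r}(f)$, where $f\in C(G^{F^{rm}}/{\sim_{F^r}})$ is $f(x)=\tilde\xi(x\sigma^r)$; this is a class function on $G^{F^r}$. Then $$|G^{F^{rm}}|^{-1}\sum_{\hat g\in G^{F^{rm}}}\tilde\xi(N_r(\hat g)\sigma^r)=|G^F|^{-1}\sum_{g\in G^F}R^{(m)}_{\tilde\xi}(g).$$
   Context: $G$ is a connected algebraic group defined over $\mathbb F_q$ with Frobenius map $F$. For a finite group $\Gamma$ with automorphism $\phi$, $\Gamma/{\sim_\phi}$ is the set of $\phi$-twisted conjugacy classes ($x\sim z^{-1}x\phi(z)$), and $C(Y)$ is the space of $\bar{\mathbb Q}_\ell$-valued functions on $Y$. Norm map: for commuting Frobenius maps $F_1,F_2$ on a connected group $X$ and $x\in X^{F_1}$, choose $\alpha\in X$ with $x=\alpha^{-1}F_2(\alpha)$ and put $x'=F_1(\alpha)\alpha^{-1}\in X^{F_2}$; this induces a bijection $N_{F_1/F_2}:X^{F_1}/{\sim_{F_2}}\to X^{F_2}/{\sim_{F_1^{-1}}}$. Shintani descent $Sh_{F_1/F_2}:C(X^{F_1}/{\sim_{F_2}})\to C(X^{F_2}/{\sim_{F_1^{-1}}})$ is $Sh_{F_1/F_2}(f)(N_{F_1/F_2}(x))=f(x)$. Here $F_1=F^{rm}$,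 $F_2=F^r$, and $F^{rm}$ acts trivially on $G^{F^r}$, so the target is the space of class functions on $G^{F^r}$. $\sigma=F|_{G^{F^{rm}}}$, $G^{F^{rm}}\langle\sigma\rangle$ is the semidirect product with the cyclic group of order $rm$ generated by $\sigma$ ($\sigma g\sigma^{-1}=F(g)$), and $G^{F^{rm}}\langle\sigma^r\rangle$ its subgroup generated by $G^{F^{rm}}$ and $\sigma^r$. For $x\in G^{F^{rm}}$, $N_k(x)=xF(x)\cdots F^{k-1}(x)$. *)

theory Defs
  imports "HOL-Algebra.Group" "Jordan_Normal_Form.Matrix" "HOL.Complex"
begin

definition fixpts :: "('g, 'b) monoid_scheme \<Rightarrow> ('g \<Rightarrow> 'g) \<Rightarrow> 'g set" where
  "fixpts G \<phi> = {x \<in> carrier G. \<phi> x = x}"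

text \<open>A connected algebraic group over F_q with Frobenius map F is modelled by a
group G with a bijective endomorphism F all of whose powers F^k (k >= 1) have finitely
many fixed points and satisfy Lang's theorem (surjectivity of the Lang map).\<close>
definition frobenius_setting :: "('g, 'b) monoid_scheme \<Rightarrow> ('g \<Rightarrow> 'g) \<Rightarrow> bool" where
  "frobenius_setting G F \<longleftrightarrow> group G \<and> F \<in> hom G G \<and> bij_betw F (carrier G) (carrier G) \<and>
     (\<forall>k\<ge>1. finite (fixpts G (F ^^ k))) \<and>
     (\<forall>k\<ge>1. \<forall>x\<in>carrier G. \<exists>\<alpha>\<in>carrier G. x = inv\<^bsub>G\<^esub> \<alpha> \<otimes>\<^bsub>G\<^esub> (F ^^ k) \<alpha>)"

fun normk :: "('g, 'b) monoid_scheme \<Rightarrow> ('g \<Rightarrow> 'g) \<Rightarrow> nat \<Rightarrow> 'g \<Rightarrow> 'g" where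
  "normk G F 0 x = \<one>\<^bsub>G\<^esub>"
| "normk G F (Suc k) x = normk G F k x \<otimes>\<^bsub>G\<^esub> (F ^^ k) x"

definition norm_rel :: "('g, 'b) monoid_scheme \<Rightarrow> ('g \<Rightarrow> 'g) \<Rightarrow> ('g \<Rightarrow> 'g) \<Rightarrow> 'g \<Rightarrow> 'g \<Rightarrow> bool" where
  "norm_rel G F1 F2 x x' \<longleftrightarrow>
     (\<exists>\<alpha>\<in>carrier G. x = inv\<^bsub>G\<^esub> \<alpha> \<otimes>\<^bsub>G\<^esub> F2 \<alpha> \<and> x' = F1 \<alpha> \<otimes>\<^bsub>G\<^esub> inv\<^bsub>G\<^esub> \<alpha>)"

definition twisted_conj :: "('g, 'b) monoid_scheme \<Rightarrow> ('g \<Rightarrow> 'g) \<Rightarrow> 'g set \<Rightarrow> 'g \<Rightarrow> 'g \<Rightarrow> bool" where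
  "twisted_conj G \<phi> H x y \<longleftrightarrow> (\<exists>z\<in>H. y = inv\<^bsub>G\<^esub> z \<otimes>\<^bsub>G\<^esub> x \<otimes>\<^bsub>G\<^esub> \<phi> z)"

text \<open>Sh_{F1/F2}(f)(N(x)) = f(x): the value at g is f(x) for any x in G^{F1} whose norm class
is the F1^{-1}-twisted class of g in G^{F2}.\<close>
definition shintani :: "('g, 'b) monoid_scheme \<Rightarrow> ('g \<Rightarrow> 'g) \<Rightarrow> ('g \<Rightarrow> 'g) \<Rightarrow> ('g \<Rightarrow> 'c) \<Rightarrow> 'g \<Rightarrow> 'c" where
  "shintani G F1 F2 f g = f (SOME x. x \<in> fixpts G F1 \<and>
      (\<exists>x'. norm_rel G F1 F2 x x' \<and> x' \<in> fixpts G F2 \<and>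
            twisted_conj G (inv_into (carrier G) F1) (fixpts G F2) x' g))"

section \<open>Characters (over the complex numbers, standing in for Qbar_l)\<close>

definition mat_trace :: "complex mat \<Rightarrow> complex" where
  "mat_trace A = (\<Sum>i<dim_row A. A $$ (i, i))"

definition is_rep :: "('a, 'b) monoid_scheme \<Rightarrow> nat \<Rightarrow> ('a \<Rightarrow> complex mat) \<Rightarrow> bool" where
  "is_rep H n \<rho> \<longleftrightarrow> (\<forall>g\<in>carrier H. \<rho> g \<in> carrier_mat n n) \<and>
      \<rho> \<one>\<^bsub>H\<^esub> = 1\<^sub>m n \<and>
      (\<forall>g\<in>carrier H. \<forall>h\<in>carrier H. \<rho> (g \<otimes>\<^bsub>H\<^esub> h) = \<rho> g * \<rho> h)"

definition is_subspace :: "nat \<Rightarrow> complex vec set \<Rightarrow> bool" where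
  "is_subspace n W \<longleftrightarrow> W \<subseteq> carrier_vec n \<and> 0\<^sub>v n \<in> W \<and>
      (\<forall>v\<in>W. \<forall>w\<in>W. v + w \<in> W) \<and> (\<forall>c. \<forall>v\<in>W. c \<cdot>\<^sub>v v \<in> W)"

definition is_irred_rep :: "('a, 'b) monoid_scheme \<Rightarrow> nat \<Rightarrow> ('a \<Rightarrow> complex mat) \<Rightarrow> bool" where
  "is_irred_rep H n \<rho> \<longleftrightarrow> is_rep H n \<rho> \<and> n > 0 \<and>
      \<not> (\<exists>W. is_subspace n W \<and> W \<noteq> {0\<^sub>v n} \<and> W \<noteq> carrier_vec n \<and>
             (\<forall>g\<in>carrier H. \<forall>w\<in>W. \<rho> g *\<^sub>v w \<in> W))"

definition is_character :: "('a, 'b) monoid_scheme \<Rightarrow> ('a \<Rightarrow> complex) \<Rightarrow> bool" where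
  "is_character H \<chi> \<longleftrightarrow> (\<exists>n \<rho>. is_rep H n \<rho> \<and> (\<forall>g\<in>carrier H. \<chi> g = mat_trace (\<rho> g)))"

definition is_irred_character :: "('a, 'b) monoid_scheme \<Rightarrow> ('a \<Rightarrow> complex) \<Rightarrow> bool" where
  "is_irred_character H \<chi> \<longleftrightarrow>
     (\<exists>n \<rho>. is_irred_rep H n \<rho> \<and> (\<forall>g\<in>carrier H. \<chi> g = mat_trace (\<rho> g)))"

text \<open>Elements (x, k) stand for x sigma^k with k taken mod rm; sigma g sigma^-1 = F(g).
Only the k divisible by r occur (subgroup generated by G^{F^{rm}} and sigma^r).\<close>
definition fix_group :: "('g, 'b) monoid_scheme \<Rightarrow> ('g \<Rightarrow> 'g) \<Rightarrow> 'g monoid" where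
  "fix_group G \<phi> = \<lparr>carrier = fixpts G \<phi>, mult = mult G, one = one G\<rparr>"

definition sigma_ext_group :: "('g, 'b) monoid_scheme \<Rightarrow> ('g \<Rightarrow> 'g) \<Rightarrow> nat \<Rightarrow> nat \<Rightarrow> ('g \<times> nat) monoid" where
  "sigma_ext_group G F r m =
     \<lparr>carrier = {(x, k). x \<in> fixpts G (F ^^ (r * m)) \<and> k < r * m \<and> r dvd k},
      mult = (\<lambda>(x, a) (y, b). (x \<otimes>\<^bsub>G\<^esub> (F ^^ a) y, (a + b) mod (r * m))),
      one = (\<one>\<^bsub>G\<^esub>, 0)\<rparr>"

end

theory Submission
  imports Defs
begin

(* Let f x = xi~(x sigma^r) and count the values f(alpha^-1 F^r(alpha)) over the set of alpha with
   F^(rm)(alpha) alpha^-1 in G^F, equivalently alpha^-1 F(alpha) in G^(F^(rm)).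
   The fibres of alpha |-> alpha^-1 F(alpha) are the cosets G^F alpha (Lang's theorem for F), and
   alpha^-1 F^r(alpha) = N_r(alpha^-1 F(alpha)), so the total is |G^F| times the left-hand sum.
   The fibres of alpha |-> F^(rm)(alpha) alpha^-1 are the cosets alpha G^(F^(rm)) (Lang's theorem
   for F^(rm)), and since xi~ is a class function, f is constant on F^r-twisted classes of
   G^(F^(rm)), so f(alpha^-1 F^r(alpha)) is the Shintani descent of f at F^(rm)(alpha) alpha^-1;
   hence the total is also |G^(F^(rm))| times the right-hand sum. *)

lemma mat_trace_mult_comm:
  assumes "A \<in> carrier_mat n n" "B \<in> carrier_mat n n"
  shows "mat_trace (A * B) = mat_trace (B * A)"
proof -
  have "mat_trace (A * B) = (\<Sum>i<n. \<Sum>k<n. A $$ (i, k) * B $$ (k, i))"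
    using assms by (simp add: mat_trace_def scalar_prod_def row_def col_def atLeast0LessThan)
  also have "\<dots> = (\<Sum>k<n. \<Sum>i<n. B $$ (k, i) * A $$ (i, k))"
    by (subst sum.swap) (simp add: mult.commute)
  also have "\<dots> = mat_trace (B * A)"
    using assms by (simp add: mat_trace_def scalar_prod_def row_def col_def atLeast0LessThan)
  finally show ?thesis .
qed

lemma mat_trace_conj:
  assumes "A \<in> carrier_mat n n" "B \<in> carrier_mat n n" "C \<in> carrier_mat n n"
    and "C * B = 1\<^sub>m n"
  shows "mat_trace (B * A * C) = mat_trace A"
proof -
  have "mat_trace (B * A * C) = mat_trace (B * (A * C))"
    using assms by (simp add: assoc_mult_mat)
  also have "\<dots> = mat_trace (A * C * B)"
    using assms by (intro mat_trace_mult_comm[of _ n]) auto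
  also have "\<dots> = mat_trace A"
    using assms by (simp add: assoc_mult_mat[of A n n C n B n])
  finally show ?thesis .
qed

lemma character_conj_invariant:
  assumes "is_character H \<chi>"
    and "g \<in> carrier H" "g' \<in> carrier H" "x \<in> carrier H"
    and "g' \<otimes>\<^bsub>H\<^esub> x \<in> carrier H" "g' \<otimes>\<^bsub>H\<^esub> x \<otimes>\<^bsub>H\<^esub> g \<in> carrier H"
    and "g \<otimes>\<^bsub>H\<^esub> g' = \<one>\<^bsub>H\<^esub>"
  shows "\<chi> (g' \<otimes>\<^bsub>H\<^esub> x \<otimes>\<^bsub>H\<^esub> g) = \<chi> x"
proof -
  obtain n \<rho> where rep: "is_rep H n \<rho>" and tr: "\<forall>y\<in>carrier H. \<chi> y = mat_trace (\<rho> y)"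
    using assms(1) unfolding is_character_def by blast
  have "\<rho> g * \<rho> g' = 1\<^sub>m n"
    using rep assms(2,3,7) unfolding is_rep_def by metis
  moreover have "\<rho> (g' \<otimes>\<^bsub>H\<^esub> x \<otimes>\<^bsub>H\<^esub> g) = \<rho> g' * \<rho> x * \<rho> g"
    using rep assms(2-5) unfolding is_rep_def by metis
  ultimately show ?thesis
    using rep assms tr by (simp add: mat_trace_conj[of _ n] is_rep_def)
qed

lemma sum_preimage_const_fibres:
  fixes k :: "'b \<Rightarrow> 'c::comm_semiring_1"
  assumes "finite T"
    and "\<And>y. y \<in> T \<Longrightarrow> finite {x \<in> A. p x = y}"
    and "\<And>y. y \<in> T \<Longrightarrow> card {x \<in> A. p x = y} = c"
  shows "(\<Sum>x\<in>{x \<in> A. p x \<in> T}. k (p x)) = of_nat c * sum k T"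
proof -
  define S where "S = {x \<in> A. p x \<in> T}"
  have fibre: "{x \<in> S. p x = y} = {x \<in> A. p x = y}" if "y \<in> T" for y
    using that by (auto simp: S_def)
  have "S = (\<Union>y\<in>T. {x \<in> A. p x = y})" by (auto simp: S_def)
  then have "finite S" using assms(1,2) by simp
  then have "(\<Sum>x\<in>S. k (p x)) = (\<Sum>y\<in>T. \<Sum>x\<in>{x \<in> S. p x = y}. k (p x))"
    using assms(1) by (intro sum.group[symmetric]) (auto simp: S_def)
  also have "\<dots> = (\<Sum>y\<in>T. of_nat c * k y)"
    using assms(3) by (intro sum.cong) (simp_all add: fibre)
  finally show ?thesis by (simp add: S_def sum_distrib_left)
qed

lemma funpow_commute: "(f ^^ m) ((f ^^ n) x) = (f ^^ n) ((f ^^ m) x)"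
  by (metis add.commute comp_apply funpow_add)

lemma fixpts_subset_fixpts_funpow: "fixpts G \<phi> \<subseteq> fixpts G (\<phi> ^^ k)"
  by (induction k) (auto simp: fixpts_def)

context group
begin

lemma inv_mult_eq_inv_mult_iff:
  assumes "a \<in> carrier G" "b \<in> carrier G" "x \<in> carrier G" "y \<in> carrier G"
  shows "inv a \<otimes> x = inv b \<otimes> y \<longleftrightarrow> x \<otimes> inv y = a \<otimes> inv b"
proof -
  have "inv a \<otimes> x = inv b \<otimes> y \<longleftrightarrow> x = a \<otimes> inv b \<otimes> y"
    using assms by (metis inv_closed inv_solve_left m_assoc m_closed)
  also have "\<dots> \<longleftrightarrow> x \<otimes> inv y = a \<otimes> inv b"
    using assms by (metis inv_closed inv_solve_right m_closed)
  finally show ?thesis .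
qed

lemma funpow_in_hom: "\<phi> \<in> hom G G \<Longrightarrow> \<phi> ^^ k \<in> hom G G"
  by (induction k) (auto simp: hom_def Pi_def)

lemma endo_hom_inv: "\<phi> \<in> hom G G \<Longrightarrow> x \<in> carrier G \<Longrightarrow> \<phi> (inv x) = inv (\<phi> x)"
  by (simp add: group_hom.hom_inv group_hom_axioms_def group_hom_def is_group)

lemma fixpts_subgroup: "\<phi> \<in> hom G G \<Longrightarrow> subgroup (fixpts G \<phi>) G"
  by unfold_locales (auto simp: fixpts_def hom_mult endo_hom_inv hom_one is_group)

lemma lang_eq_iff:
  assumes "\<phi> \<in> hom G G" "\<alpha> \<in> carrier G" "\<beta> \<in> carrier G"
  shows "inv \<alpha> \<otimes> \<phi> \<alpha> = inv \<beta> \<otimes> \<phi> \<beta> \<longleftrightarrow> \<alpha> \<otimes> inv \<beta> \<in> fixpts G \<phi>"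
  using assms by (auto simp: fixpts_def inv_mult_eq_inv_mult_iff hom_mult endo_hom_inv hom_in_carrier)

lemma twisted_lang_eq_iff:
  assumes "\<phi> \<in> hom G G" "\<alpha> \<in> carrier G" "\<beta> \<in> carrier G"
  shows "\<phi> \<alpha> \<otimes> inv \<alpha> = \<phi> \<beta> \<otimes> inv \<beta> \<longleftrightarrow> inv \<alpha> \<otimes> \<beta> \<in> fixpts G \<phi>"
  using assms inv_mult_eq_inv_mult_iff[of "\<phi> \<alpha>" "\<alpha>" "\<phi> \<beta>" "\<beta>"]
  by (auto simp: fixpts_def hom_mult endo_hom_inv hom_in_carrier)

lemma lang_fibre:
  assumes "\<phi> \<in> hom G G" "\<alpha>\<^sub>0 \<in> carrier G"
  shows "{\<alpha> \<in> carrier G. inv \<alpha> \<otimes> \<phi> \<alpha> = inv \<alpha>\<^sub>0 \<otimes> \<phi> \<alpha>\<^sub>0} = (\<lambda>h. h \<otimes> \<alpha>\<^sub>0) ` fixpts G \<phi>"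
proof (intro equalityI subsetI)
  fix \<alpha> assume "\<alpha> \<in> {\<alpha> \<in> carrier G. inv \<alpha> \<otimes> \<phi> \<alpha> = inv \<alpha>\<^sub>0 \<otimes> \<phi> \<alpha>\<^sub>0}"
  then have "\<alpha> \<in> carrier G" "\<alpha> \<otimes> inv \<alpha>\<^sub>0 \<in> fixpts G \<phi>"
    using assms lang_eq_iff by auto
  moreover have "\<alpha> = \<alpha> \<otimes> inv \<alpha>\<^sub>0 \<otimes> \<alpha>\<^sub>0"
    using \<open>\<alpha> \<in> carrier G\<close> assms(2) by (simp add: m_assoc)
  ultimately show "\<alpha> \<in> (\<lambda>h. h \<otimes> \<alpha>\<^sub>0) ` fixpts G \<phi>" by blast
next
  fix \<alpha> assume "\<alpha> \<in> (\<lambda>h. h \<otimes> \<alpha>\<^sub>0) ` fixpts G \<phi>"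
  then obtain h where h: "h \<in> fixpts G \<phi>" and "\<alpha> = h \<otimes> \<alpha>\<^sub>0" by blast
  moreover have "h \<otimes> \<alpha>\<^sub>0 \<otimes> inv \<alpha>\<^sub>0 = h"
    using h assms(2) by (simp add: fixpts_def m_assoc)
  ultimately show "\<alpha> \<in> {\<alpha> \<in> carrier G. inv \<alpha> \<otimes> \<phi> \<alpha> = inv \<alpha>\<^sub>0 \<otimes> \<phi> \<alpha>\<^sub>0}"
    using assms lang_eq_iff[of \<phi> "h \<otimes> \<alpha>\<^sub>0" \<alpha>\<^sub>0] by (auto simp: fixpts_def)
qed

lemma twisted_lang_fibre:
  assumes "\<phi> \<in> hom G G" "\<alpha>\<^sub>0 \<in> carrier G"
  shows "{\<alpha> \<in> carrier G. \<phi> \<alpha> \<otimes> inv \<alpha> = \<phi> \<alpha>\<^sub>0 \<otimes> inv \<alpha>\<^sub>0} = (\<lambda>h. \<alpha>\<^sub>0 \<otimes> h) ` fixpts G \<phi>"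
proof (intro equalityI subsetI)
  fix \<alpha> assume "\<alpha> \<in> {\<alpha> \<in> carrier G. \<phi> \<alpha> \<otimes> inv \<alpha> = \<phi> \<alpha>\<^sub>0 \<otimes> inv \<alpha>\<^sub>0}"
  then have "\<alpha> \<in> carrier G" "inv \<alpha>\<^sub>0 \<otimes> \<alpha> \<in> fixpts G \<phi>"
    using assms twisted_lang_eq_iff[of \<phi> \<alpha>\<^sub>0 \<alpha>] by auto
  moreover have "\<alpha> = \<alpha>\<^sub>0 \<otimes> (inv \<alpha>\<^sub>0 \<otimes> \<alpha>)"
    using \<open>\<alpha> \<in> carrier G\<close> assms(2) by (simp add: m_assoc[symmetric])
  ultimately show "\<alpha> \<in> (\<lambda>h. \<alpha>\<^sub>0 \<otimes> h) ` fixpts G \<phi>" by blast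
next
  fix \<alpha> assume "\<alpha> \<in> (\<lambda>h. \<alpha>\<^sub>0 \<otimes> h) ` fixpts G \<phi>"
  then obtain h where h: "h \<in> fixpts G \<phi>" and "\<alpha> = \<alpha>\<^sub>0 \<otimes> h" by blast
  moreover have "inv \<alpha>\<^sub>0 \<otimes> (\<alpha>\<^sub>0 \<otimes> h) = h"
    using h assms(2) by (simp add: fixpts_def m_assoc[symmetric])
  ultimately show "\<alpha> \<in> {\<alpha> \<in> carrier G. \<phi> \<alpha> \<otimes> inv \<alpha> = \<phi> \<alpha>\<^sub>0 \<otimes> inv \<alpha>\<^sub>0}"
    using assms twisted_lang_eq_iff[of \<phi> \<alpha>\<^sub>0 "\<alpha>\<^sub>0 \<otimes> h"] by (auto simp: fixpts_def)
qed

lemma lang_fixed_iff: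
  assumes "\<phi> \<in> hom G G" "\<psi> \<in> hom G G" "\<And>x. x \<in> carrier G \<Longrightarrow> \<phi> (\<psi> x) = \<psi> (\<phi> x)"
    and "\<alpha> \<in> carrier G"
  shows "\<phi> \<alpha> \<otimes> inv \<alpha> \<in> fixpts G \<psi> \<longleftrightarrow> inv \<alpha> \<otimes> \<psi> \<alpha> \<in> fixpts G \<phi>"
proof -
  have carr: "\<phi> \<alpha> \<in> carrier G" "\<psi> \<alpha> \<in> carrier G" "\<psi> (\<phi> \<alpha>) \<in> carrier G"
    using assms by (auto intro: hom_in_carrier)
  have "\<phi> \<alpha> \<otimes> inv \<alpha> \<in> fixpts G \<psi> \<longleftrightarrow> \<psi> (\<phi> \<alpha>) \<otimes> inv (\<psi> \<alpha>) = \<phi> \<alpha> \<otimes> inv \<alpha>"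
    using assms carr by (simp add: fixpts_def hom_mult endo_hom_inv)
  also have "\<dots> \<longleftrightarrow> inv (\<phi> \<alpha>) \<otimes> \<psi> (\<phi> \<alpha>) = inv \<alpha> \<otimes> \<psi> \<alpha>"
    using assms carr by (simp add: inv_mult_eq_inv_mult_iff)
  also have "\<dots> \<longleftrightarrow> inv \<alpha> \<otimes> \<psi> \<alpha> \<in> fixpts G \<phi>"
    using assms carr by (simp add: fixpts_def hom_mult endo_hom_inv)
  finally show ?thesis .
qed

lemma twisted_lang_surj:
  assumes "\<phi> \<in> hom G G" "\<forall>x\<in>carrier G. \<exists>\<alpha>\<in>carrier G. x = inv \<alpha> \<otimes> \<phi> \<alpha>"
    and "x \<in> carrier G"
  obtains \<alpha> where "\<alpha> \<in> carrier G" "x = \<phi> \<alpha> \<otimes> inv \<alpha>"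
proof -
  obtain \<beta> where \<beta>: "\<beta> \<in> carrier G" "inv x = inv \<beta> \<otimes> \<phi> \<beta>"
    using assms by blast
  then have "x = \<phi> (inv \<beta>) \<otimes> inv (inv \<beta>)"
    using assms by (metis endo_hom_inv hom_in_carrier inv_inv inv_mult_group inv_closed)
  with \<beta> show ?thesis using that by blast
qed

lemma normk_lang:
  assumes "\<phi> \<in> hom G G" "\<alpha> \<in> carrier G"
  shows "normk G \<phi> k (inv \<alpha> \<otimes> \<phi> \<alpha>) = inv \<alpha> \<otimes> (\<phi> ^^ k) \<alpha>"
proof (induction k)
  case (Suc k)
  have hom: "\<phi> ^^ k \<in> hom G G" "\<phi> ^^ Suc k \<in> hom G G"
    using assms(1) by (simp_all only: funpow_in_hom)
  have "normk G \<phi> (Suc k) (inv \<alpha> \<otimes> \<phi> \<alpha>) = inv \<alpha> \<otimes> (\<phi> ^^ k) \<alpha> \<otimes> (inv ((\<phi> ^^ k) \<alpha>) \<otimes> (\<phi> ^^ Suc k) \<alpha>)"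
    using Suc assms hom by (simp add: hom_mult endo_hom_inv hom_in_carrier funpow_swap1)
  also have "\<dots> = inv \<alpha> \<otimes> (\<phi> ^^ Suc k) \<alpha>"
    using assms hom by (simp add: hom_in_carrier m_assoc[symmetric]) (simp add: m_assoc hom_in_carrier)
  finally show ?case .
qed (simp add: assms(2))

lemma sum_lang_preimage:
  fixes k :: "'a \<Rightarrow> 'c::comm_semiring_1"
  assumes "\<phi> \<in> hom G G" "\<forall>x\<in>carrier G. \<exists>\<alpha>\<in>carrier G. x = inv \<alpha> \<otimes> \<phi> \<alpha>"
    and "finite T" "T \<subseteq> carrier G" "finite (fixpts G \<phi>)"
  shows "(\<Sum>\<alpha>\<in>{\<alpha> \<in> carrier G. inv \<alpha> \<otimes> \<phi> \<alpha> \<in> T}. k (inv \<alpha> \<otimes> \<phi> \<alpha>))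
       = of_nat (card (fixpts G \<phi>)) * sum k T"
proof (rule sum_preimage_const_fibres[OF assms(3)])
  fix y assume "y \<in> T"
  then obtain \<alpha>\<^sub>0 where \<alpha>\<^sub>0: "\<alpha>\<^sub>0 \<in> carrier G" "y = inv \<alpha>\<^sub>0 \<otimes> \<phi> \<alpha>\<^sub>0"
    using assms(2,4) by blast
  then have fibre: "{\<alpha> \<in> carrier G. inv \<alpha> \<otimes> \<phi> \<alpha> = y} = (\<lambda>h. h \<otimes> \<alpha>\<^sub>0) ` fixpts G \<phi>"
    using lang_fibre[OF assms(1)] by simp
  have "inj_on (\<lambda>h. h \<otimes> \<alpha>\<^sub>0) (fixpts G \<phi>)"
    using inj_on_multc[OF \<alpha>\<^sub>0(1)] by (rule inj_on_subset) (auto simp: fixpts_def)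
  then show "card {\<alpha> \<in> carrier G. inv \<alpha> \<otimes> \<phi> \<alpha> = y} = card (fixpts G \<phi>)"
    by (simp add: fibre card_image)
  show "finite {\<alpha> \<in> carrier G. inv \<alpha> \<otimes> \<phi> \<alpha> = y}"
    using assms(5) by (simp add: fibre)
qed

lemma sum_twisted_lang_preimage:
  fixes k :: "'a \<Rightarrow> 'c::comm_semiring_1"
  assumes "\<phi> \<in> hom G G" "\<forall>x\<in>carrier G. \<exists>\<alpha>\<in>carrier G. x = inv \<alpha> \<otimes> \<phi> \<alpha>"
    and "finite T" "T \<subseteq> carrier G" "finite (fixpts G \<phi>)"
  shows "(\<Sum>\<alpha>\<in>{\<alpha> \<in> carrier G. \<phi> \<alpha> \<otimes> inv \<alpha> \<in> T}. k (\<phi> \<alpha> \<otimes> inv \<alpha>))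
       = of_nat (card (fixpts G \<phi>)) * sum k T"
proof (rule sum_preimage_const_fibres[OF assms(3)])
  fix y assume "y \<in> T"
  then obtain \<alpha>\<^sub>0 where \<alpha>\<^sub>0: "\<alpha>\<^sub>0 \<in> carrier G" "y = \<phi> \<alpha>\<^sub>0 \<otimes> inv \<alpha>\<^sub>0"
    using twisted_lang_surj[OF assms(1,2)] assms(4) by blast
  then have fibre: "{\<alpha> \<in> carrier G. \<phi> \<alpha> \<otimes> inv \<alpha> = y} = (\<lambda>h. \<alpha>\<^sub>0 \<otimes> h) ` fixpts G \<phi>"
    using twisted_lang_fibre[OF assms(1)] by simp
  have "inj_on (\<lambda>h. \<alpha>\<^sub>0 \<otimes> h) (fixpts G \<phi>)"
    using inj_on_cmult[OF \<alpha>\<^sub>0(1)] by (rule inj_on_subset) (auto simp: fixpts_def)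
  then show "card {\<alpha> \<in> carrier G. \<phi> \<alpha> \<otimes> inv \<alpha> = y} = card (fixpts G \<phi>)"
    by (simp add: fibre card_image)
  show "finite {\<alpha> \<in> carrier G. \<phi> \<alpha> \<otimes> inv \<alpha> = y}"
    using assms(5) by (simp add: fibre)
qed

lemma norm_class_inj:
  assumes hom: "F\<^sub>1 \<in> hom G G" "F\<^sub>2 \<in> hom G G" and bij: "bij_betw F\<^sub>1 (carrier G) (carrier G)"
    and comm: "\<And>x. x \<in> carrier G \<Longrightarrow> F\<^sub>1 (F\<^sub>2 x) = F\<^sub>2 (F\<^sub>1 x)"
    and \<alpha>: "\<alpha> \<in> carrier G" and \<beta>: "\<beta> \<in> carrier G" and z: "z \<in> fixpts G F\<^sub>2"
    and conj: "F\<^sub>1 \<alpha> \<otimes> inv \<alpha> = inv z \<otimes> (F\<^sub>1 \<beta> \<otimes> inv \<beta>) \<otimes> inv_into (carrier G) F\<^sub>1 z"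
  obtains h where "h \<in> fixpts G F\<^sub>1" "inv \<alpha> \<otimes> F\<^sub>2 \<alpha> = inv h \<otimes> (inv \<beta> \<otimes> F\<^sub>2 \<beta>) \<otimes> F\<^sub>2 h"
proof -
  define w where "w = inv_into (carrier G) F\<^sub>1 z"
  have zc: "z \<in> carrier G" "F\<^sub>2 z = z" using z by (auto simp: fixpts_def)
  then have "z \<in> F\<^sub>1 ` carrier G" using bij by (simp add: bij_betw_def)
  then have w: "w \<in> carrier G" "F\<^sub>1 w = z"
    unfolding w_def by (auto intro: inv_into_into f_inv_into_f)
  have "F\<^sub>1 (F\<^sub>2 w) = F\<^sub>1 w" using comm w zc by simp
  then have "w \<in> fixpts G F\<^sub>2"
    using bij w hom by (auto simp: fixpts_def bij_betw_def hom_in_carrier dest: inj_onD)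
  then have inv_w: "inv w \<in> fixpts G F\<^sub>2"
    using subgroup.m_inv_closed[OF fixpts_subgroup[OF hom(2)]] by blast
  \<comment> \<open>Replacing \<beta> by inv w \<otimes> \<beta> keeps inv \<beta> \<otimes> F2 \<beta> (w is F2-fixed) and moves F1 \<beta> \<otimes> inv \<beta> onto F1 \<alpha> \<otimes> inv \<alpha>.\<close>
  define \<gamma> where "\<gamma> = inv w \<otimes> \<beta>"
  have \<gamma>: "\<gamma> \<in> carrier G" using w \<beta> by (simp add: \<gamma>_def)
  have "F\<^sub>1 \<gamma> \<otimes> inv \<gamma> = inv z \<otimes> (F\<^sub>1 \<beta> \<otimes> inv \<beta>) \<otimes> w"
    using w \<beta> hom zc by (simp add: \<gamma>_def hom_mult endo_hom_inv hom_in_carrier inv_mult_group m_assoc)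
  then have h: "inv \<gamma> \<otimes> \<alpha> \<in> fixpts G F\<^sub>1"
    using twisted_lang_eq_iff[OF hom(1) \<gamma> \<alpha>] conj by (simp add: w_def)
  have "\<gamma> \<otimes> inv \<beta> = inv w" using w \<beta> by (simp add: \<gamma>_def m_assoc)
  then have \<gamma>_lang: "inv \<gamma> \<otimes> F\<^sub>2 \<gamma> = inv \<beta> \<otimes> F\<^sub>2 \<beta>"
    using lang_eq_iff[OF hom(2) \<gamma> \<beta>] inv_w by simp
  have "inv \<alpha> \<otimes> F\<^sub>2 \<alpha> = inv (inv \<gamma> \<otimes> \<alpha>) \<otimes> (inv \<gamma> \<otimes> F\<^sub>2 \<gamma>) \<otimes> F\<^sub>2 (inv \<gamma> \<otimes> \<alpha>)"
    using \<alpha> \<gamma> hom by (simp add: hom_mult endo_hom_inv hom_in_carrier inv_mult_group m_assoc)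
      (simp add: hom_in_carrier m_assoc[symmetric])
  with h that show ?thesis by (simp add: \<gamma>_lang)
qed

lemma shintani_at_norm:
  fixes f :: "'a \<Rightarrow> 'c"
  assumes hom: "F\<^sub>1 \<in> hom G G" "F\<^sub>2 \<in> hom G G" and bij: "bij_betw F\<^sub>1 (carrier G) (carrier G)"
    and comm: "\<And>x. x \<in> carrier G \<Longrightarrow> F\<^sub>1 (F\<^sub>2 x) = F\<^sub>2 (F\<^sub>1 x)"
    and \<alpha>: "\<alpha> \<in> carrier G" and fixed: "F\<^sub>1 \<alpha> \<otimes> inv \<alpha> \<in> fixpts G F\<^sub>2"
    and invariant: "\<And>h y. h \<in> fixpts G F\<^sub>1 \<Longrightarrow> y \<in> fixpts G F\<^sub>1 \<Longrightarrow> f (inv h \<otimes> y \<otimes> F\<^sub>2 h) = f y"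
  shows "shintani G F\<^sub>1 F\<^sub>2 f (F\<^sub>1 \<alpha> \<otimes> inv \<alpha>) = f (inv \<alpha> \<otimes> F\<^sub>2 \<alpha>)"
proof -
  define g where "g = F\<^sub>1 \<alpha> \<otimes> inv \<alpha>"
  define P where "P x \<longleftrightarrow> x \<in> fixpts G F\<^sub>1 \<and>
      (\<exists>x'. norm_rel G F\<^sub>1 F\<^sub>2 x x' \<and> x' \<in> fixpts G F\<^sub>2 \<and>
            twisted_conj G (inv_into (carrier G) F\<^sub>1) (fixpts G F\<^sub>2) x' g)" for x
  have "inv_into (carrier G) F\<^sub>1 \<one> = \<one>"
    using bij hom by (intro inv_into_f_eq) (auto simp: bij_betw_def hom_one is_group)
  then have "twisted_conj G (inv_into (carrier G) F\<^sub>1) (fixpts G F\<^sub>2) g g"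
    unfolding twisted_conj_def using hom \<alpha>
    by (intro bexI[of _ \<one>]) (auto simp: g_def fixpts_def hom_one is_group hom_in_carrier)
  moreover have "inv \<alpha> \<otimes> F\<^sub>2 \<alpha> \<in> fixpts G F\<^sub>1"
    using lang_fixed_iff[OF hom comm \<alpha>] fixed by simp
  ultimately have "P (inv \<alpha> \<otimes> F\<^sub>2 \<alpha>)"
    using fixed \<alpha> unfolding P_def norm_rel_def g_def by blast
  then have "P (SOME x. P x)" by (rule someI)
  then obtain \<beta> z where x\<^sub>0: "(SOME x. P x) \<in> fixpts G F\<^sub>1" "(SOME x. P x) = inv \<beta> \<otimes> F\<^sub>2 \<beta>"
    and \<beta>: "\<beta> \<in> carrier G" and z: "z \<in> fixpts G F\<^sub>2"
    and "g = inv z \<otimes> (F\<^sub>1 \<beta> \<otimes> inv \<beta>) \<otimes> inv_into (carrier G) F\<^sub>1 z"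
    unfolding P_def norm_rel_def twisted_conj_def by blast
  \<comment> \<open>The representative chosen by SOME lies in the class of the one exhibited above.\<close>
  then obtain h where "h \<in> fixpts G F\<^sub>1" "inv \<alpha> \<otimes> F\<^sub>2 \<alpha> = inv h \<otimes> (SOME x. P x) \<otimes> F\<^sub>2 h"
    using norm_class_inj[OF hom bij comm \<alpha> \<beta> z] by (auto simp: g_def)
  then have "f (inv \<alpha> \<otimes> F\<^sub>2 \<alpha>) = f (SOME x. P x)"
    using invariant x\<^sub>0(1) by simp
  then show ?thesis by (simp add: shintani_def P_def g_def)
qed

lemma card_mult_sum_normk_eq_card_mult_sum_shintani:
  fixes f :: "'a \<Rightarrow> 'c::comm_semiring_1"
  assumes hom: "F \<in> hom G G" and bij: "bij_betw F (carrier G) (carrier G)"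
    and fin: "finite (fixpts G F)" "finite (fixpts G (F ^^ a))"
    and lang: "\<forall>x\<in>carrier G. \<exists>\<alpha>\<in>carrier G. x = inv \<alpha> \<otimes> F \<alpha>"
      "\<forall>x\<in>carrier G. \<exists>\<alpha>\<in>carrier G. x = inv \<alpha> \<otimes> (F ^^ a) \<alpha>"
    and invariant: "\<And>h y. h \<in> fixpts G (F ^^ a) \<Longrightarrow> y \<in> fixpts G (F ^^ a) \<Longrightarrow>
                      f (inv h \<otimes> y \<otimes> (F ^^ b) h) = f y"
  shows "of_nat (card (fixpts G F)) * (\<Sum>x\<in>fixpts G (F ^^ a). f (normk G F b x))
       = of_nat (card (fixpts G (F ^^ a))) * (\<Sum>g\<in>fixpts G F. shintani G (F ^^ a) (F ^^ b) f g)"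
proof -
  define S where "S = {\<alpha> \<in> carrier G. (F ^^ a) \<alpha> \<otimes> inv \<alpha> \<in> fixpts G F}"
  have homs: "F ^^ a \<in> hom G G" "F ^^ b \<in> hom G G"
    using hom by (simp_all add: funpow_in_hom)
  have "(F ^^ a) (F x) = F ((F ^^ a) x)" for x
    by (simp add: funpow_swap1)
  then have "S = {\<alpha> \<in> carrier G. inv \<alpha> \<otimes> F \<alpha> \<in> fixpts G (F ^^ a)}"
    unfolding S_def using lang_fixed_iff[OF homs(1) hom] by blast
  then have "(\<Sum>\<alpha>\<in>S. f (inv \<alpha> \<otimes> (F ^^ b) \<alpha>))
      = (\<Sum>\<alpha>\<in>{\<alpha> \<in> carrier G. inv \<alpha> \<otimes> F \<alpha> \<in> fixpts G (F ^^ a)}. f (normk G F b (inv \<alpha> \<otimes> F \<alpha>)))"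
    using hom by (simp add: normk_lang)
  also have "\<dots> = of_nat (card (fixpts G F)) * (\<Sum>x\<in>fixpts G (F ^^ a). f (normk G F b x))"
    using sum_lang_preimage[OF hom lang(1) fin(2) _ fin(1)] by (auto simp: fixpts_def)
  finally have norm_side: "(\<Sum>\<alpha>\<in>S. f (inv \<alpha> \<otimes> (F ^^ b) \<alpha>)) = \<dots>" .
  have "(\<Sum>\<alpha>\<in>S. f (inv \<alpha> \<otimes> (F ^^ b) \<alpha>))
      = (\<Sum>\<alpha>\<in>S. shintani G (F ^^ a) (F ^^ b) f ((F ^^ a) \<alpha> \<otimes> inv \<alpha>))"
  proof (rule sum.cong[OF refl])
    fix \<alpha> assume "\<alpha> \<in> S"
    then have "\<alpha> \<in> carrier G" "(F ^^ a) \<alpha> \<otimes> inv \<alpha> \<in> fixpts G (F ^^ b)"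
      using fixpts_subset_fixpts_funpow[of G F b] by (auto simp: S_def)
    with homs bij_betw_funpow[OF bij] invariant
    show "f (inv \<alpha> \<otimes> (F ^^ b) \<alpha>) = shintani G (F ^^ a) (F ^^ b) f ((F ^^ a) \<alpha> \<otimes> inv \<alpha>)"
      by (intro shintani_at_norm[symmetric]) (simp_all add: funpow_commute)
  qed
  also have "\<dots> = of_nat (card (fixpts G (F ^^ a))) * (\<Sum>g\<in>fixpts G F. shintani G (F ^^ a) (F ^^ b) f g)"
    unfolding S_def using sum_twisted_lang_preimage[OF homs(1) lang(2) fin(1) _ fin(2)]
    by (auto simp: fixpts_def)
  finally show ?thesis using norm_side by simp
qed

lemma sigma_ext_character_twisted_conj_invariant:
  assumes hom: "F \<in> hom G G" and "r \<ge> 1" "m \<ge> 1"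
    and \<chi>: "is_character (sigma_ext_group G F r m) \<chi>"
    and h: "h \<in> fixpts G (F ^^ (r * m))" and y: "y \<in> fixpts G (F ^^ (r * m))"
  shows "\<chi> (inv h \<otimes> y \<otimes> (F ^^ r) h, r mod (r * m)) = \<chi> (y, r mod (r * m))"
proof -
  define E where "E = sigma_ext_group G F r m"
  define H where "H = fixpts G (F ^^ (r * m))"
  define s where "s = r mod (r * m)"
  have s: "s < r * m" "r dvd s" using assms(2,3) by (simp_all add: s_def)
  have F_s: "(F ^^ s) h = (F ^^ r) h"
  proof (cases "m = 1")
    case True
    then show ?thesis using h by (simp add: s_def fixpts_def)
  next
    case False
    then have "s = r" using assms(2,3) by (simp add: s_def)
    then show ?thesis by simp
  qed
  have H: "subgroup H G"
    unfolding H_def using fixpts_subgroup[OF funpow_in_hom[OF hom]] .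
  have "(F ^^ (r * m)) ((F ^^ r) h) = (F ^^ r) ((F ^^ (r * m)) h)"
    by (rule funpow_commute)
  then have "(F ^^ r) h \<in> H"
    using h funpow_in_hom[OF hom] by (auto simp: H_def fixpts_def intro: hom_in_carrier)
  then have in_H: "inv h \<in> H" "inv h \<otimes> y \<in> H" "inv h \<otimes> y \<otimes> (F ^^ r) h \<in> H"
    using h y H by (simp_all add: H_def[symmetric] subgroup.m_inv_closed subgroup.m_closed)
  have carrier_E: "(x, 0) \<in> carrier E" "(x, s) \<in> carrier E" if "x \<in> H" for x
    using that s by (auto simp: E_def H_def sigma_ext_group_def)
  have mult_E: "(x, a) \<otimes>\<^bsub>E\<^esub> (x', a') = (x \<otimes> (F ^^ a) x', (a + a') mod (r * m))" for x x' a a'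
    by (simp add: E_def sigma_ext_group_def)
  have "h \<in> carrier G" using h by (simp add: fixpts_def)
  then have "(h, 0) \<otimes>\<^bsub>E\<^esub> (inv h, 0) = \<one>\<^bsub>E\<^esub>"
    by (simp add: mult_E E_def sigma_ext_group_def)
  moreover have "(inv h, 0) \<otimes>\<^bsub>E\<^esub> (y, s) = (inv h \<otimes> y, s)"
    using s by (simp add: mult_E)
  moreover have "(inv h \<otimes> y, s) \<otimes>\<^bsub>E\<^esub> (h, 0) = (inv h \<otimes> y \<otimes> (F ^^ r) h, s)"
    using s F_s by (simp add: mult_E)
  ultimately have "\<chi> (inv h \<otimes> y \<otimes> (F ^^ r) h, s) = \<chi> (y, s)"
    using character_conj_invariant[of E \<chi> "(h, 0)" "(inv h, 0)" "(y, s)"] \<chi> h y in_H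
    by (simp add: E_def[symmetric] H_def[symmetric] carrier_E)
  then show ?thesis by (simp add: s_def)
qed

end

theorem proposition1p9:
  fixes G :: "('g, 'b) monoid_scheme" and F :: "'g \<Rightarrow> 'g"
    and r m :: nat and \<xi> :: "'g \<Rightarrow> complex" and \<xi>t :: "'g \<times> nat \<Rightarrow> complex"
  assumes frob: "frobenius_setting G F"
    and r: "r \<ge> 1" and m: "m \<ge> 1"
    and irr: "is_irred_character (fix_group G (F ^^ (r * m))) \<xi>"
    and stable: "\<forall>x\<in>fixpts G (F ^^ (r * m)). \<xi> ((F ^^ r) x) = \<xi> x"
    and ext_char: "is_character (sigma_ext_group G F r m) \<xi>t"
    and ext: "\<forall>x\<in>fixpts G (F ^^ (r * m)). \<xi>t (x, 0) = \<xi> x"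
  shows "(1 / of_nat (card (fixpts G (F ^^ (r * m))))) *
           (\<Sum>x\<in>fixpts G (F ^^ (r * m)). \<xi>t (normk G F r x, r mod (r * m)))
       = (1 / of_nat (card (fixpts G F))) *
           (\<Sum>g\<in>fixpts G F.
              shintani G (F ^^ (r * m)) (F ^^ r) (\<lambda>x. \<xi>t (x, r mod (r * m))) g)"
proof -
  have "group G" and hom: "F \<in> hom G G" and bij: "bij_betw F (carrier G) (carrier G)"
    and fin: "\<And>k. k \<ge> 1 \<Longrightarrow> finite (fixpts G (F ^^ k))"
    and lang: "\<And>k. k \<ge> 1 \<Longrightarrow> \<forall>x\<in>carrier G. \<exists>\<alpha>\<in>carrier G. x = inv\<^bsub>G\<^esub> \<alpha> \<otimes>\<^bsub>G\<^esub> (F ^^ k) \<alpha>"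
    using frob unfolding frobenius_setting_def by auto
  interpret group G by fact
  have rm: "r * m \<ge> 1" using r m by simp
  have "of_nat (card (fixpts G F)) * (\<Sum>x\<in>fixpts G (F ^^ (r * m)). \<xi>t (normk G F r x, r mod (r * m)))
      = of_nat (card (fixpts G (F ^^ (r * m)))) *
          (\<Sum>g\<in>fixpts G F. shintani G (F ^^ (r * m)) (F ^^ r) (\<lambda>x. \<xi>t (x, r mod (r * m))) g)"
    using fin[of 1] fin[OF rm] lang[of 1] lang[OF rm]
      sigma_ext_character_twisted_conj_invariant[OF hom r m ext_char]
    by (intro card_mult_sum_normk_eq_card_mult_sum_shintani[OF hom bij]) auto
  moreover have "card (fixpts G F) > 0" "card (fixpts G (F ^^ (r * m))) > 0"
    using fin[of 1] fin[OF rm] fixpts_subgroup[OF hom] fixpts_subgroup[OF funpow_in_hom[OF hom]]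
    by (auto simp: card_gt_0_iff dest: subgroup.one_closed)
  ultimately show ?thesis by (simp add: field_simps)
qed

end
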